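(* Let $A=[a_{ij}]$ be the adjacency matrix of a strongly connected, aperiodic directed graph on $\mathcal X=\{1,\ldots,n\}$, and let $N\ge1$ be such that all entries of $A^N$ are positive. Let $\lambda_A$ be the spectral radius of $A$, $u,v$ positive vectors with $A^Tu=\lambda_Au$, $Av=\lambda_Av$, $\sum_iu_iv_i=1$, $\nu_{RB}(i)=u_iv_i$, $r_{ij}=\frac{v_j}{\lambda_Av_i}a_{ij}$, and $\mathfrak M_{\rm RB}(x_0,\ldots,x_N)=\nu_{RB}(x_0)r_{x_0x_1}\cdots r_{x_{N-1}x_N}$. Let $\mu_0$ be a measure on $\mathcal X$ with $\mu_0(x)>0$ for all $x$ and $\mathfrak M(x_0,\ldots,x_N)=\mu_0(x_0)a_{x_0x_1}\cdots a_{x_{N-1}x_N}$. Then $\mathfrak M_{\rm RB}$ is the solution of the problem of minimizing $\mathbb D(P\|\mathfrak M)$ over all probability distributions $P$ on $\mathcal X^{N+1}$ whose marginals at times $0$ and $N$ both equal $\nu_{RB}$.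
   Context: Relative entropy of a probability distribution $P$ with respect to a nonnegative measure $Q$ on a finite set: $\mathbb D(P\|Q)=\sum_x P(x)\log\frac{P(x)}{Q(x)}$ if $\mathrm{supp}(P)\subseteq\mathrm{supp}(Q)$ (with $0\log0=0$), and $+\infty$ otherwise. *)

theory Defs
  imports Complex_Main "HOL-Library.Extended_Real"
begin

definition mat_mult :: "('x::finite \<Rightarrow> 'x \<Rightarrow> real) \<Rightarrow> ('x \<Rightarrow> 'x \<Rightarrow> real) \<Rightarrow> 'x \<Rightarrow> 'x \<Rightarrow> real" where
  "mat_mult A B i j = (\<Sum>k\<in>UNIV. A i k * B k j)"

fun mat_pow :: "('x::finite \<Rightarrow> 'x \<Rightarrow> real) \<Rightarrow> nat \<Rightarrow> 'x \<Rightarrow> 'x \<Rightarrow> real" where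
  "mat_pow A 0 = (\<lambda>i j. if i = j then 1 else 0)"
| "mat_pow A (Suc k) = mat_mult (mat_pow A k) A"

text \<open>A is the adjacency matrix of a directed graph: entries in {0,1}; edge i->j iff A i j = 1.\<close>
definition adjacency_matrix :: "('x \<Rightarrow> 'x \<Rightarrow> real) \<Rightarrow> bool" where
  "adjacency_matrix A \<longleftrightarrow> (\<forall>i j. A i j = 0 \<or> A i j = 1)"

definition walk :: "('x \<Rightarrow> 'x \<Rightarrow> real) \<Rightarrow> nat \<Rightarrow> 'x \<Rightarrow> 'x \<Rightarrow> bool" where
  "walk A k i j \<longleftrightarrow> (\<exists>xs. length xs = Suc k \<and> xs ! 0 = i \<and> xs ! k = j \<and>
      (\<forall>t<k. A (xs ! t) (xs ! Suc t) = 1))"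

definition strongly_connected :: "('x \<Rightarrow> 'x \<Rightarrow> real) \<Rightarrow> bool" where
  "strongly_connected A \<longleftrightarrow> (\<forall>i j. \<exists>k. walk A k i j)"

definition aperiodic :: "('x \<Rightarrow> 'x \<Rightarrow> real) \<Rightarrow> bool" where
  "aperiodic A \<longleftrightarrow> Gcd {k. k > 0 \<and> (\<exists>i. walk A k i i)} = (1::nat)"

definition is_eigenvalue :: "('x::finite \<Rightarrow> 'x \<Rightarrow> real) \<Rightarrow> complex \<Rightarrow> bool" where
  "is_eigenvalue A z \<longleftrightarrow> (\<exists>w::'x \<Rightarrow> complex. w \<noteq> (\<lambda>_. 0) \<and>
      (\<forall>i. (\<Sum>j\<in>UNIV. complex_of_real (A i j) * w j) = z * w i))"

definition spectral_radius :: "('x::finite \<Rightarrow> 'x \<Rightarrow> real) \<Rightarrow> real" where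
  "spectral_radius A = Sup (cmod ` {z. is_eigenvalue A z})"

definition rel_entropy :: "'a set \<Rightarrow> ('a \<Rightarrow> real) \<Rightarrow> ('a \<Rightarrow> real) \<Rightarrow> ereal" where
  "rel_entropy S P Q =
     (if \<forall>x\<in>S. P x \<noteq> 0 \<longrightarrow> Q x \<noteq> 0
      then ereal (\<Sum>x\<in>S. if P x = 0 then 0 else P x * ln (P x / Q x))
      else \<infinity>)"

text \<open>Paths x_0,...,x_N represented as lists of length N+1.\<close>
definition paths :: "nat \<Rightarrow> 'x list set" where
  "paths N = {xs. length xs = Suc N}"

definition is_prob_dist :: "'a set \<Rightarrow> ('a \<Rightarrow> real) \<Rightarrow> bool" where
  "is_prob_dist S P \<longleftrightarrow> (\<forall>x\<in>S. P x \<ge> 0) \<and> (\<Sum>x\<in>S. P x) = 1"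

definition marginal :: "nat \<Rightarrow> nat \<Rightarrow> ('x list \<Rightarrow> real) \<Rightarrow> 'x \<Rightarrow> real" where
  "marginal N t P i = (\<Sum>xs\<in>{xs\<in>paths N. xs ! t = i}. P xs)"

end

theory Submission
  imports Defs
begin

text \<open>
  Let \<open>a(x)\<close> be the product of the entries of \<open>A\<close> along a path \<open>x = (x\<^sub>0, \<dots>, x\<^sub>N)\<close>.
  The ratios \<open>r\<close> telescope, so \<open>M\<^sub>R\<^sub>B(x) = u(x\<^sub>0) v(x\<^sub>N) a(x) / \<lambda>\<^sup>N\<close>, while
  \<open>M(x) = \<mu>\<^sub>0(x\<^sub>0) a(x)\<close>: the two measures differ by the positive factor \<open>c(x) = f(x\<^sub>0) g(x\<^sub>N)\<close>,
  which depends only on the endpoints. Hence \<open>D(P||M) = D(P||M\<^sub>R\<^sub>B) - E\<^sub>P[ln c]\<close>, and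
  \<open>E\<^sub>P[ln c]\<close> depends only on the marginals of \<open>P\<close> at times \<open>0\<close> and \<open>N\<close>, which are
  prescribed. As \<open>u\<close> and \<open>v\<close> are also eigenvectors of \<open>A\<^sup>N\<close>, \<open>M\<^sub>R\<^sub>B\<close> has these marginals
  itself, so Gibbs' inequality \<open>D(P||M\<^sub>R\<^sub>B) \<ge> 0\<close>, with equality only for \<open>P = M\<^sub>R\<^sub>B\<close>, gives
  the claim.
\<close>

lemma finite_paths: "finite (paths N :: 'x::finite list set)"
proof -
  have "paths N = {xs::'x list. set xs \<subseteq> UNIV \<and> length xs = Suc N}"
    by (auto simp: paths_def)
  thus ?thesis using finite_lists_length_eq[OF finite_UNIV] by simp
qed

lemma sum_paths_marginal:
  fixes P :: "'x::finite list \<Rightarrow> real"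
  shows "(\<Sum>xs\<in>paths N. P xs * f (xs!t)) = (\<Sum>i\<in>UNIV. marginal N t P i * f i)"
proof -
  have "(\<Sum>i\<in>UNIV. marginal N t P i * f i)
      = (\<Sum>i\<in>UNIV. \<Sum>xs\<in>{xs\<in>paths N. xs ! t = i}. P xs * f (xs!t))"
    unfolding marginal_def sum_distrib_right by (intro sum.cong refl) auto
  also have "\<dots> = (\<Sum>xs\<in>paths N. P xs * f (xs!t))"
    by (rule sum.group) (auto simp: finite_paths)
  finally show ?thesis by simp
qed

lemma sum_paths_endpoints:
  fixes P :: "'x::finite list \<Rightarrow> real"
  shows "(\<Sum>xs\<in>paths N. P xs * (f (xs!0) + g (xs!N)))
       = (\<Sum>i\<in>UNIV. marginal N 0 P i * f i) + (\<Sum>j\<in>UNIV. marginal N N P j * g j)"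
  using sum_paths_marginal[where P = P and f = f and t = 0]
    sum_paths_marginal[where P = P and f = g and t = N]
  by (simp add: distrib_left sum.distrib)

definition path_weight :: "('x \<Rightarrow> 'x \<Rightarrow> real) \<Rightarrow> nat \<Rightarrow> 'x list \<Rightarrow> real" where
  "path_weight A N xs = (\<Prod>t<N. A (xs!t) (xs!Suc t))"

lemma path_weight_nonneg: "\<forall>i j. A i j \<ge> 0 \<Longrightarrow> path_weight A N xs \<ge> 0"
  by (simp add: path_weight_def prod_nonneg)

lemma prod_ratio_telescope:
  assumes "\<forall>i. v i \<noteq> (0::real)"
  shows "(\<Prod>t<n. v (xs!Suc t) / v (xs!t)) = v (xs!n) / v (xs!0)"
proof (induction n)
  case (Suc n)
  have "v (xs!n) \<noteq> 0" using assms by blast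
  then show ?case by (simp add: Suc.IH)
qed (simp add: assms)

lemma path_weight_doob_transform:
  assumes "\<forall>i. v i \<noteq> 0"
  shows "path_weight (\<lambda>i j. v j / (lam * v i) * A i j) N xs
       = v (xs!N) / (v (xs!0) * lam ^ N) * path_weight A N xs"
proof -
  have "path_weight (\<lambda>i j. v j / (lam * v i) * A i j) N xs
      = (\<Prod>t<N. v (xs!Suc t) / v (xs!t) * (1 / lam) * A (xs!t) (xs!Suc t))"
    unfolding path_weight_def by (intro prod.cong refl) simp
  also have "\<dots> = (\<Prod>t<N. v (xs!Suc t) / v (xs!t)) * (1 / lam) ^ N * path_weight A N xs"
    unfolding path_weight_def prod.distrib by simp
  also have "\<dots> = v (xs!N) / (v (xs!0) * lam ^ N) * path_weight A N xs"
    unfolding prod_ratio_telescope[OF assms] by (simp add: power_one_over)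
  finally show ?thesis .
qed

lemma sum_path_weight_eq_mat_pow:
  fixes A :: "'x::finite \<Rightarrow> 'x \<Rightarrow> real"
  shows "(\<Sum>xs\<in>{xs\<in>paths N. xs!0 = i \<and> xs!N = j}. path_weight A N xs) = mat_pow A N i j"
proof (induction N arbitrary: j)
  case 0
  have "{xs\<in>paths 0. xs!0 = i \<and> xs!0 = j} = (if i = j then {[i]} else {})"
    by (auto simp: paths_def length_Suc_conv)
  then show ?case by (simp add: path_weight_def)
next
  case (Suc N)
  have extend: "(\<Sum>ys\<in>{ys\<in>paths N. ys!0 = i}. path_weight A N ys * A (ys!N) j)
     = (\<Sum>xs\<in>{xs\<in>paths (Suc N). xs!0 = i \<and> xs!Suc N = j}. path_weight A (Suc N) xs)"
  proof (rule sum.reindex_bij_witness[where j = "\<lambda>ys. ys @ [j]" and i = butlast])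
    fix b assume b: "b \<in> {xs\<in>paths (Suc N). xs!0 = i \<and> xs!Suc N = j}"
    then have "b \<noteq> []" by (auto simp: paths_def)
    with b have "last b = j" by (auto simp: paths_def last_conv_nth)
    with \<open>b \<noteq> []\<close> show "butlast b @ [j] = b" by (metis append_butlast_last_id)
    show "butlast b \<in> {ys\<in>paths N. ys!0 = i}" using b by (auto simp: paths_def nth_butlast)
  next
    fix a assume a: "a \<in> {ys\<in>paths N. ys!0 = i}"
    show "butlast (a @ [j]) = a" by simp
    show "a @ [j] \<in> {xs\<in>paths (Suc N). xs!0 = i \<and> xs!Suc N = j}"
      using a by (auto simp: paths_def nth_append)
    have "path_weight A N (a @ [j]) = path_weight A N a"
      using a unfolding path_weight_def by (intro prod.cong refl) (auto simp: paths_def nth_append)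
    then show "path_weight A (Suc N) (a @ [j]) = path_weight A N a * A (a!N) j"
      using a by (simp add: path_weight_def paths_def nth_append)
  qed
  have "(\<Sum>xs\<in>{xs\<in>paths (Suc N). xs!0 = i \<and> xs!Suc N = j}. path_weight A (Suc N) xs)
      = (\<Sum>k\<in>UNIV. \<Sum>ys\<in>{ys\<in>{ys\<in>paths N. ys!0 = i}. ys!N = k}. path_weight A N ys * A (ys!N) j)"
    unfolding extend[symmetric] by (rule sum.group[symmetric]) (auto simp: finite_paths)
  also have "\<dots> = (\<Sum>k\<in>UNIV. (\<Sum>ys\<in>{ys\<in>paths N. ys!0 = i \<and> ys!N = k}. path_weight A N ys) * A k j)"
    unfolding sum_distrib_right by (intro sum.cong) auto
  also have "\<dots> = mat_pow A (Suc N) i j"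
    using Suc by (simp add: mat_mult_def)
  finally show ?case .
qed

lemma mat_pow_right_eigenvector:
  fixes A :: "'x::finite \<Rightarrow> 'x \<Rightarrow> real"
  assumes "\<forall>i. (\<Sum>j\<in>UNIV. A i j * v j) = lam * v i"
  shows "(\<Sum>j\<in>UNIV. mat_pow A n i j * v j) = lam ^ n * v i"
proof (induction n arbitrary: i)
  case 0
  have "(\<Sum>j\<in>UNIV. mat_pow A 0 i j * v j) = (\<Sum>j\<in>UNIV. if i = j then v j else 0)"
    by (intro sum.cong) auto
  then show ?case by simp
next
  case (Suc n)
  have "(\<Sum>j\<in>UNIV. mat_pow A (Suc n) i j * v j)
      = (\<Sum>j\<in>UNIV. \<Sum>l\<in>UNIV. mat_pow A n i l * (A l j * v j))"
    by (simp add: mat_mult_def sum_distrib_right mult.assoc)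
  also have "\<dots> = (\<Sum>l\<in>UNIV. mat_pow A n i l * (\<Sum>j\<in>UNIV. A l j * v j))"
    by (subst sum.swap) (simp add: sum_distrib_left)
  also have "\<dots> = lam * (\<Sum>l\<in>UNIV. mat_pow A n i l * v l)"
    using assms by (simp add: sum_distrib_left mult_ac)
  finally show ?case using Suc by simp
qed

lemma mat_pow_left_eigenvector:
  fixes A :: "'x::finite \<Rightarrow> 'x \<Rightarrow> real"
  assumes "\<forall>j. (\<Sum>i\<in>UNIV. A i j * u i) = lam * u j"
  shows "(\<Sum>i\<in>UNIV. u i * mat_pow A n i j) = lam ^ n * u j"
proof (induction n arbitrary: j)
  case 0
  have "(\<Sum>i\<in>UNIV. u i * mat_pow A 0 i j) = (\<Sum>i\<in>UNIV. if i = j then u i else 0)"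
    by (intro sum.cong) auto
  then show ?case by simp
next
  case (Suc n)
  have "(\<Sum>i\<in>UNIV. u i * mat_pow A (Suc n) i j)
      = (\<Sum>i\<in>UNIV. \<Sum>l\<in>UNIV. u i * mat_pow A n i l * A l j)"
    by (simp add: mat_mult_def sum_distrib_left mult.assoc)
  also have "\<dots> = (\<Sum>l\<in>UNIV. (\<Sum>i\<in>UNIV. u i * mat_pow A n i l) * A l j)"
    by (subst sum.swap) (simp add: sum_distrib_right)
  also have "\<dots> = lam ^ n * (\<Sum>l\<in>UNIV. A l j * u l)"
    using Suc by (simp add: sum_distrib_left mult_ac)
  finally show ?case using assms by simp
qed

lemma marginal_start_endpoint_weighted:
  fixes A :: "'x::finite \<Rightarrow> 'x \<Rightarrow> real"
  shows "marginal N 0 (\<lambda>xs. f (xs!0) * g (xs!N) * path_weight A N xs) i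
       = f i * (\<Sum>j\<in>UNIV. mat_pow A N i j * g j)"
proof -
  have "marginal N 0 (\<lambda>xs. f (xs!0) * g (xs!N) * path_weight A N xs) i
      = (\<Sum>j\<in>UNIV. \<Sum>xs\<in>{xs\<in>{xs\<in>paths N. xs!0 = i}. xs!N = j}. f (xs!0) * g (xs!N) * path_weight A N xs)"
    unfolding marginal_def by (rule sum.group[symmetric]) (auto simp: finite_paths)
  also have "\<dots> = (\<Sum>j\<in>UNIV. f i * g j * (\<Sum>xs\<in>{xs\<in>paths N. xs!0 = i \<and> xs!N = j}. path_weight A N xs))"
    unfolding sum_distrib_left by (intro sum.cong) auto
  finally show ?thesis
    unfolding sum_path_weight_eq_mat_pow by (simp add: sum_distrib_left mult_ac)
qed

lemma marginal_end_endpoint_weighted: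
  fixes A :: "'x::finite \<Rightarrow> 'x \<Rightarrow> real"
  shows "marginal N N (\<lambda>xs. f (xs!0) * g (xs!N) * path_weight A N xs) j
       = (\<Sum>i\<in>UNIV. f i * mat_pow A N i j) * g j"
proof -
  have "marginal N N (\<lambda>xs. f (xs!0) * g (xs!N) * path_weight A N xs) j
      = (\<Sum>i\<in>UNIV. \<Sum>xs\<in>{xs\<in>{xs\<in>paths N. xs!N = j}. xs!0 = i}. f (xs!0) * g (xs!N) * path_weight A N xs)"
    unfolding marginal_def by (rule sum.group[symmetric]) (auto simp: finite_paths)
  also have "\<dots> = (\<Sum>i\<in>UNIV. f i * g j * (\<Sum>xs\<in>{xs\<in>paths N. xs!0 = i \<and> xs!N = j}. path_weight A N xs))"
  proof (intro sum.cong refl)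
    fix i
    have "{xs\<in>{xs\<in>paths N. xs!N = j}. xs!0 = i} = {xs\<in>paths N. xs!0 = i \<and> xs!N = j}" by auto
    then show "(\<Sum>xs\<in>{xs\<in>{xs\<in>paths N. xs!N = j}. xs!0 = i}. f (xs!0) * g (xs!N) * path_weight A N xs)
      = f i * g j * (\<Sum>xs\<in>{xs\<in>paths N. xs!0 = i \<and> xs!N = j}. path_weight A N xs)"
      unfolding sum_distrib_left by (intro sum.cong) auto
  qed
  finally show ?thesis
    unfolding sum_path_weight_eq_mat_pow sum_distrib_right by (simp add: mult_ac)
qed

lemma doob_path_measure_marginals:
  fixes A :: "'x::finite \<Rightarrow> 'x \<Rightarrow> real"
  assumes ueig: "\<forall>j. (\<Sum>i\<in>UNIV. A i j * u i) = lam * u j"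
    and veig: "\<forall>i. (\<Sum>j\<in>UNIV. A i j * v j) = lam * v i"
    and lam: "lam \<noteq> 0"
  shows "marginal N 0 (\<lambda>xs. u (xs!0) * (v (xs!N) / lam ^ N) * path_weight A N xs) = (\<lambda>i. u i * v i)"
    and "marginal N N (\<lambda>xs. u (xs!0) * (v (xs!N) / lam ^ N) * path_weight A N xs) = (\<lambda>i. u i * v i)"
proof -
  show "marginal N 0 (\<lambda>xs. u (xs!0) * (v (xs!N) / lam ^ N) * path_weight A N xs) = (\<lambda>i. u i * v i)"
  proof
    fix i
    have "(\<Sum>j\<in>UNIV. mat_pow A N i j * (v j / lam ^ N)) = lam ^ N * v i / lam ^ N"
      using mat_pow_right_eigenvector[OF veig] by (simp add: sum_divide_distrib[symmetric])
    then show "marginal N 0 (\<lambda>xs. u (xs!0) * (v (xs!N) / lam ^ N) * path_weight A N xs) i = u i * v i"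
      unfolding marginal_start_endpoint_weighted[where f = u and g = "\<lambda>j. v j / lam ^ N"]
      using lam by simp
  qed
  show "marginal N N (\<lambda>xs. u (xs!0) * (v (xs!N) / lam ^ N) * path_weight A N xs) = (\<lambda>i. u i * v i)"
    unfolding marginal_end_endpoint_weighted[where f = u and g = "\<lambda>j. v j / lam ^ N"]
      mat_pow_left_eigenvector[OF ueig] using lam by auto
qed

lemma eigenvalue_pos_if_mat_pow_pos:
  fixes A :: "'x::finite \<Rightarrow> 'x \<Rightarrow> real"
  assumes A: "\<forall>i j. A i j \<ge> 0" and v: "\<forall>i. v i > 0"
    and eig: "\<forall>i. (\<Sum>j\<in>UNIV. A i j * v j) = lam * v i"
    and N: "N \<ge> 1" "\<forall>i j. mat_pow A N i j > 0"
  shows "lam > 0"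
proof -
  fix i :: 'x
  have "0 \<le> (\<Sum>j\<in>UNIV. A i j * v j)"
    using A v by (intro sum_nonneg mult_nonneg_nonneg) (auto simp: less_imp_le)
  then have "lam * v i \<ge> 0" using eig by simp
  then have "lam \<ge> 0" using v[rule_format, of i] by (simp add: zero_le_mult_iff)
  have "lam ^ N * v i > 0"
    unfolding mat_pow_right_eigenvector[OF eig, symmetric] using N(2) v
    by (intro sum_pos) auto
  then have "lam \<noteq> 0" using N(1) by (auto simp: zero_power)
  with \<open>lam \<ge> 0\<close> show ?thesis by simp
qed

lemma entropy_term_ge_diff:
  fixes p q :: real
  assumes "p \<ge> 0" "q \<ge> 0" "p \<noteq> 0 \<Longrightarrow> q \<noteq> 0"
  shows "p - q \<le> (if p = 0 then 0 else p * ln (p / q))"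
    and "(if p = 0 then 0 else p * ln (p / q)) = p - q \<Longrightarrow> p = q"
proof -
  have ln_ratio: "p * ln (p / q) = - p * ln (q / p) \<and> ln (q / p) \<le> q / p - 1"
    if "p > 0" "q > 0"
    using that ln_le_minus_one[of "q / p"] by (simp add: ln_div algebra_simps)
  show "p - q \<le> (if p = 0 then 0 else p * ln (p / q))"
  proof (cases "p = 0")
    case False
    then have "p > 0" "q > 0" using assms by auto
    with ln_ratio have "p * ln (q / p) \<le> p * (q / p - 1)" by (intro mult_left_mono) auto
    with ln_ratio \<open>p > 0\<close> \<open>q > 0\<close> False show ?thesis by (simp add: algebra_simps)
  qed (use assms in simp)
  assume eq: "(if p = 0 then 0 else p * ln (p / q)) = p - q"
  show "p = q"
  proof (cases "p = 0")
    case False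
    then have "p > 0" "q > 0" using assms by auto
    with eq ln_ratio False have "p * ln (q / p) = p * (q / p - 1)" by (simp add: algebra_simps)
    with \<open>p > 0\<close> have "ln (q / p) = q / p - 1" by simp
    then have "q / p = 1" using \<open>p > 0\<close> \<open>q > 0\<close> by (intro ln_eq_minus_one) auto
    with \<open>p > 0\<close> show ?thesis by simp
  qed (use eq in simp)
qed

lemma rel_entropy_nonneg:
  assumes "finite S" "is_prob_dist S P" "is_prob_dist S Q"
  shows "rel_entropy S P Q \<ge> 0"
proof (cases "\<forall>x\<in>S. P x \<noteq> 0 \<longrightarrow> Q x \<noteq> 0")
  case True
  have "(\<Sum>x\<in>S. P x - Q x) \<le> (\<Sum>x\<in>S. if P x = 0 then 0 else P x * ln (P x / Q x))"
    using assms(2,3) True by (intro sum_mono entropy_term_ge_diff(1)) (auto simp: is_prob_dist_def)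
  moreover have "(\<Sum>x\<in>S. P x - Q x) = 0"
    using assms(2,3) by (simp add: sum_subtractf is_prob_dist_def)
  ultimately show ?thesis using True by (simp add: rel_entropy_def)
qed (auto simp: rel_entropy_def)

lemma rel_entropy_eq_0_imp_eq:
  assumes S: "finite S" and P: "is_prob_dist S P" and Q: "is_prob_dist S Q"
    and D0: "rel_entropy S P Q = 0" and x: "x \<in> S"
  shows "P x = Q x"
proof -
  define D where "D y = (if P y = 0 then 0 else P y * ln (P y / Q y))" for y
  have supp: "\<forall>y\<in>S. P y \<noteq> 0 \<longrightarrow> Q y \<noteq> 0"
    using D0 by (auto simp: rel_entropy_def split: if_splits)
  have gap_nonneg: "\<forall>y\<in>S. D y - (P y - Q y) \<ge> 0"
    using P Q supp entropy_term_ge_diff(1) by (auto simp: D_def is_prob_dist_def)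
  have "(\<Sum>y\<in>S. D y) = 0"
    using D0 supp by (simp add: rel_entropy_def D_def)
  moreover have "(\<Sum>y\<in>S. P y - Q y) = 0"
    using P Q by (simp add: sum_subtractf is_prob_dist_def)
  ultimately have "(\<Sum>y\<in>S. D y - (P y - Q y)) = 0" by (simp add: sum_subtractf)
  then have "D x = P x - Q x"
    using sum_nonneg_eq_0_iff[OF S, of "\<lambda>y. D y - (P y - Q y)"] gap_nonneg x by auto
  then show ?thesis
    using entropy_term_ge_diff(2) P Q supp x by (auto simp: D_def is_prob_dist_def)
qed

lemma rel_entropy_self: "rel_entropy S Q Q = 0"
  by (auto simp: rel_entropy_def intro!: sum.neutral)

lemma rel_entropy_scale_reference:
  assumes P: "\<forall>x\<in>S. P x \<ge> 0" and Q: "\<forall>x\<in>S. Q x \<ge> 0" and c: "\<forall>x\<in>S. c x > 0"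
  shows "rel_entropy S P (\<lambda>x. c x * Q x) = rel_entropy S P Q - ereal (\<Sum>x\<in>S. P x * ln (c x))"
proof (cases "\<forall>x\<in>S. P x \<noteq> 0 \<longrightarrow> Q x \<noteq> 0")
  case True
  have "(if P x = 0 then 0 else P x * ln (P x / (c x * Q x)))
      = (if P x = 0 then 0 else P x * ln (P x / Q x)) - P x * ln (c x)" if "x \<in> S" for x
  proof (cases "P x = 0")
    case False
    then have "P x > 0" "Q x > 0" using P Q True that by (auto simp: order.strict_iff_order)
    then have "P x / Q x > 0" "c x > 0" using c that by auto
    moreover have "P x / (c x * Q x) = (P x / Q x) / c x" by simp
    ultimately have "ln (P x / (c x * Q x)) = ln (P x / Q x) - ln (c x)"
      by (simp only: ln_divide_pos)
    with False show ?thesis by (simp add: right_diff_distrib)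
  qed simp
  moreover have "\<forall>x\<in>S. P x \<noteq> 0 \<longrightarrow> c x * Q x \<noteq> 0" using True c by auto
  ultimately show ?thesis
    using True by (simp add: rel_entropy_def sum_subtractf cong: sum.cong)
next
  case False
  then have "\<not> (\<forall>x\<in>S. P x \<noteq> 0 \<longrightarrow> c x * Q x \<noteq> 0)" by auto
  with False show ?thesis by (auto simp: rel_entropy_def)
qed

lemma rel_entropy_endpoint_reweighting:
  fixes P Q :: "'x::finite list \<Rightarrow> real"
  assumes P: "\<forall>xs\<in>paths N. P xs \<ge> 0" and Q: "\<forall>xs\<in>paths N. Q xs \<ge> 0"
    and f: "\<forall>i. f i > 0" and g: "\<forall>j. g j > 0"
  shows "rel_entropy (paths N) P (\<lambda>xs. f (xs!0) * g (xs!N) * Q xs)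
       = rel_entropy (paths N) P Q
         - ereal ((\<Sum>i\<in>UNIV. marginal N 0 P i * ln (f i)) + (\<Sum>j\<in>UNIV. marginal N N P j * ln (g j)))"
proof -
  have "(\<Sum>xs\<in>paths N. P xs * ln (f (xs!0) * g (xs!N)))
      = (\<Sum>xs\<in>paths N. P xs * (ln (f (xs!0)) + ln (g (xs!N))))"
    using f g by (simp add: ln_mult_pos)
  then show ?thesis
    using rel_entropy_scale_reference[of "paths N" P Q "\<lambda>xs. f (xs!0) * g (xs!N)"] P Q f g
      sum_paths_endpoints[where P = P and f = "\<lambda>i. ln (f i)" and g = "\<lambda>j. ln (g j)"]
    by simp
qed

lemma rel_entropy_unique_minimizer_by_shift:
  assumes S: "finite S" and P: "is_prob_dist S P" and Q: "is_prob_dist S Q"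
    and shift_P: "rel_entropy S P M = rel_entropy S P Q - ereal \<kappa>"
    and shift_Q: "rel_entropy S Q M = - ereal \<kappa>"
  shows "rel_entropy S Q M \<le> rel_entropy S P M"
    and "rel_entropy S P M = rel_entropy S Q M \<Longrightarrow> x \<in> S \<Longrightarrow> P x = Q x"
proof -
  have "rel_entropy S P Q \<ge> 0" using rel_entropy_nonneg[OF S P Q] .
  then show "rel_entropy S Q M \<le> rel_entropy S P M"
    unfolding shift_P shift_Q by (cases "rel_entropy S P Q") auto
  assume "rel_entropy S P M = rel_entropy S Q M" "x \<in> S"
  moreover from this(1) have "rel_entropy S P Q = 0"
    unfolding shift_P shift_Q by (cases "rel_entropy S P Q") auto
  ultimately show "P x = Q x" using rel_entropy_eq_0_imp_eq[OF S P Q] by blast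
qed

theorem proposition4p2:
  fixes A :: "'x::finite \<Rightarrow> 'x \<Rightarrow> real"
    and N :: nat and u v mu0 :: "'x \<Rightarrow> real" and lam :: real
    and nuRB :: "'x \<Rightarrow> real" and r :: "'x \<Rightarrow> 'x \<Rightarrow> real"
    and MRB M :: "'x list \<Rightarrow> real"
  assumes adj: "adjacency_matrix A"
    and sc: "strongly_connected A"
    and ap: "aperiodic A"
    and N: "N \<ge> 1" "\<forall>i j. mat_pow A N i j > 0"
    and lam: "lam = spectral_radius A"
    and upos: "\<forall>i. u i > 0" and vpos: "\<forall>i. v i > 0"
    and ueig: "\<forall>j. (\<Sum>i\<in>UNIV. A i j * u i) = lam * u j"
    and veig: "\<forall>i. (\<Sum>j\<in>UNIV. A i j * v j) = lam * v i"
    and norm: "(\<Sum>i\<in>UNIV. u i * v i) = 1"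
    and nuRB: "\<forall>i. nuRB i = u i * v i"
    and r: "\<forall>i j. r i j = v j / (lam * v i) * A i j"
    and MRB: "\<forall>xs. MRB xs = nuRB (xs ! 0) * (\<Prod>t<N. r (xs ! t) (xs ! Suc t))"
    and mu0: "\<forall>x. mu0 x > 0"
    and M: "\<forall>xs. M xs = mu0 (xs ! 0) * (\<Prod>t<N. A (xs ! t) (xs ! Suc t))"
  shows "is_prob_dist (paths N) MRB \<and> marginal N 0 MRB = nuRB \<and> marginal N N MRB = nuRB
    \<and> (\<forall>P. is_prob_dist (paths N) P \<and> marginal N 0 P = nuRB \<and> marginal N N P = nuRB
          \<longrightarrow> rel_entropy (paths N) MRB M \<le> rel_entropy (paths N) P M)
    \<and> (\<forall>P. is_prob_dist (paths N) P \<and> marginal N 0 P = nuRB \<and> marginal N N P = nuRB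
          \<and> rel_entropy (paths N) P M = rel_entropy (paths N) MRB M
          \<longrightarrow> (\<forall>xs\<in>paths N. P xs = MRB xs))"
proof -
  let ?S = "paths N :: 'x list set"
  have A_nonneg: "\<forall>i j. A i j \<ge> 0"
    using adj by (metis adjacency_matrix_def order_refl zero_le_one)
  have lam_pos: "lam > 0"
    using eigenvalue_pos_if_mat_pow_pos[OF A_nonneg vpos veig N] .
  have MRB_eq: "MRB = (\<lambda>xs. u (xs!0) * (v (xs!N) / lam ^ N) * path_weight A N xs)"
  proof
    fix xs
    have r_eq: "(\<lambda>i j. v j / (lam * v i) * A i j) = r" using r by (intro ext) simp
    have v_nonzero: "\<forall>i. v i \<noteq> 0" using vpos by (metis less_irrefl)
    have "MRB xs = u (xs!0) * v (xs!0) * path_weight r N xs"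
      using MRB nuRB by (simp add: path_weight_def)
    then show "MRB xs = u (xs!0) * (v (xs!N) / lam ^ N) * path_weight A N xs"
      unfolding r_eq[symmetric] path_weight_doob_transform[OF v_nonzero]
      using v_nonzero by simp
  qed
  have MRB_marginals: "marginal N 0 MRB = nuRB" "marginal N N MRB = nuRB"
    unfolding MRB_eq using doob_path_measure_marginals[OF ueig veig] lam_pos nuRB by auto
  have MRB_prob: "is_prob_dist ?S MRB"
    using sum_paths_marginal[where P = MRB and f = "\<lambda>_. 1" and t = 0] MRB_marginals nuRB norm
      upos vpos lam_pos path_weight_nonneg[OF A_nonneg]
    by (auto simp: is_prob_dist_def MRB_eq less_imp_le intro!: mult_nonneg_nonneg)
  define f where "f i = mu0 i * lam ^ N / u i" for i
  define g where "g j = 1 / v j" for j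
  have fg_pos: "\<forall>i. f i > 0" "\<forall>j. g j > 0"
    using mu0 upos vpos lam_pos by (simp_all add: f_def g_def)
  have M_eq: "M = (\<lambda>xs. f (xs!0) * g (xs!N) * MRB xs)"
  proof
    fix xs
    have "u (xs!0) > 0" "v (xs!N) > 0" "lam > 0" using upos vpos lam_pos by auto
    moreover have "M xs = mu0 (xs!0) * path_weight A N xs" using M by (simp add: path_weight_def)
    ultimately show "M xs = f (xs!0) * g (xs!N) * MRB xs"
      unfolding MRB_eq f_def g_def by (simp add: field_simps)
  qed
  define \<kappa> where "\<kappa> = (\<Sum>i\<in>UNIV. nuRB i * ln (f i)) + (\<Sum>j\<in>UNIV. nuRB j * ln (g j))"
  have shift: "rel_entropy ?S P M = rel_entropy ?S P MRB - ereal \<kappa>"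
    if "is_prob_dist ?S P" "marginal N 0 P = nuRB" "marginal N N P = nuRB" for P
    unfolding M_eq \<kappa>_def using that MRB_prob fg_pos
    by (simp add: rel_entropy_endpoint_reweighting is_prob_dist_def)
  have MRB_value: "rel_entropy ?S MRB M = - ereal \<kappa>"
    unfolding shift[OF MRB_prob MRB_marginals] rel_entropy_self by simp
  show ?thesis
    using rel_entropy_unique_minimizer_by_shift[OF finite_paths _ MRB_prob shift MRB_value]
      MRB_prob MRB_marginals by blast
qed

end
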